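(* Let $k\ge 4$, $s\ge 1$, $p\ge 0$ be integers and let $k>u_1>u_2>\cdots>u_p\ge 3$ be integers such that $\sum_{i=1}^{\min\{s+1,p\}}u_i\le sk$. Then there exists a binary self-orthogonal Griesmer code with parameters $$\Big[s(2^k-1)-\sum_{i=1}^p(2^{u_i}-1),\ k,\ s2^{k-1}-\sum_{i=1}^p2^{u_i-1}\Big].$$
   Context: A binary code $C$ is self-orthogonal if $C\subseteq C^\perp$. A binary linear $[n,k,d]$ code is a Griesmer code if $n=\sum_{i=0}^{k-1}\lceil d/2^i\rceil$. *)

theory Defs
  imports Complex_Main
begin

text \<open>Binary vectors of length n are boolean lists of length n (True = 1, False = 0).
  Addition over GF(2) is componentwise exclusive or.\<close>

definition bin_add :: "bool list \<Rightarrow> bool list \<Rightarrow> bool list" where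
  "bin_add x y = map2 (\<noteq>) x y"

definition zero_vec :: "nat \<Rightarrow> bool list" where
  "zero_vec n = replicate n False"

text \<open>A binary linear code of length n: a GF(2)-subspace of GF(2)^n
  (over GF(2), closure under addition plus containing 0 is exactly being a subspace).\<close>
definition bin_linear_code :: "nat \<Rightarrow> bool list set \<Rightarrow> bool" where
  "bin_linear_code n C \<longleftrightarrow>
     C \<subseteq> {v. length v = n} \<and> zero_vec n \<in> C \<and> (\<forall>x\<in>C. \<forall>y\<in>C. bin_add x y \<in> C)"

definition code_dim :: "bool list set \<Rightarrow> nat \<Rightarrow> bool" where
  "code_dim C k \<longleftrightarrow> card C = 2 ^ k"

definition hweight :: "bool list \<Rightarrow> nat" where
  "hweight v = length (filter id v)"

text \<open>Minimum distance of a linear code = minimum Hamming weight of a nonzero codeword.\<close>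
definition min_dist :: "nat \<Rightarrow> bool list set \<Rightarrow> nat" where
  "min_dist n C = Min {hweight c | c. c \<in> C \<and> c \<noteq> zero_vec n}"

definition bin_inner :: "nat \<Rightarrow> bool list \<Rightarrow> bool list \<Rightarrow> bool" where
  "bin_inner n x y \<longleftrightarrow> odd (card {i. i < n \<and> x ! i \<and> y ! i})"

definition dual_code :: "nat \<Rightarrow> bool list set \<Rightarrow> bool list set" where
  "dual_code n C = {v. length v = n \<and> (\<forall>c\<in>C. \<not> bin_inner n v c)}"

definition self_orthogonal :: "nat \<Rightarrow> bool list set \<Rightarrow> bool" where
  "self_orthogonal n C \<longleftrightarrow> C \<subseteq> dual_code n C"

definition griesmer_params :: "nat \<Rightarrow> nat \<Rightarrow> nat \<Rightarrow> bool" where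
  "griesmer_params n k d \<longleftrightarrow> int n = (\<Sum>i<k. \<lceil>real d / 2 ^ i\<rceil>)"

definition bin_code_params :: "bool list set \<Rightarrow> nat \<Rightarrow> nat \<Rightarrow> nat \<Rightarrow> bool" where
  "bin_code_params C n k d \<longleftrightarrow> bin_linear_code n C \<and> code_dim C k \<and> min_dist n C = d"

end

theory Submission
  imports Defs "HOL-Computational_Algebra.Squarefree"
    "Berlekamp_Zassenhaus.Distinct_Degree_Factorization"
begin

text \<open>Identify GF(2)^k with the binary polynomials of degree below k. For each i pick an
  irreducible polynomial g_i of degree k - u_i and let U_i be the u_i-dimensional space of its
  multiples of degree below k. The g_i have distinct degrees, hence are pairwise coprime, so a
  nonzero vector lying in s + 1 of the U_i would be divisible by a polynomial of degree at least
  (s + 1) k - s k = k; thus every nonzero vector lies in at most s of them. Take as columns of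
  a generator matrix every nonzero vector x, repeated s minus the number of U_i containing x.
  The codeword of a nonzero message a then has weight s 2^(k-1) minus 2^(u_i - 1) for every U_i
  on which a does not vanish. Since u_i \<ge> 3 and k \<ge> 4 all weights are divisible by 4, so the
  code is self-orthogonal; the minimum weight is attained by the last coordinate functional,
  which vanishes on no U_i; and the Griesmer equality is arithmetic on the binary expansion of
  the sum of the 2^(u_i - 1).\<close>

section \<open>Irreducible polynomials over finite prime fields\<close>

lemma sum_powers_less_power:
  fixes q :: nat
  assumes "q \<ge> 2"
  shows "(\<Sum>i<n. q ^ i) < q ^ n"
proof (induction n)
  case (Suc n)
  have "(\<Sum>i<Suc n. q ^ i) < 2 * q ^ n" using Suc by simp
  also have "\<dots> \<le> q ^ Suc n" using assms by simp
  finally show ?case .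
qed simp

lemma sum_distinct_powers_less_power:
  fixes q :: nat
  assumes "q \<ge> 2" and "E \<subseteq> {..<m}"
  shows "(\<Sum>e\<in>E. q ^ e) < q ^ m"
proof -
  have "(\<Sum>e\<in>E. q ^ e) \<le> (\<Sum>e<m. q ^ e)"
    using assms(2) by (intro sum_mono2) auto
  also have "\<dots> < q ^ m" using assms(1) by (rule sum_powers_less_power)
  finally show ?thesis .
qed

lemma degree_monom_power_minus_monom:
  assumes "m > 1"
  shows "degree (monom (1::'a::comm_ring_1) 1 ^ m - monom 1 1) = m"
proof -
  have "monom (1::'a) 1 ^ m - monom 1 1 = monom 1 m + - monom 1 1"
    unfolding x_pow_n by simp
  also have "degree \<dots> = m"
    using assms by (subst degree_add_eq_left) (simp_all add: degree_monom_eq)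
  finally show ?thesis .
qed

lemma squarefree_if_pderiv_unit:
  fixes f :: "'a::idom poly"
  assumes "pderiv f dvd 1"
  shows "squarefree f"
proof (rule squarefreeI)
  fix x assume "x ^ 2 dvd f"
  then have "x * x dvd f" by (simp add: power2_eq_square)
  then obtain h where "f = x * x * h" by (rule dvdE)
  then have "pderiv f = x * (2 * pderiv x * h + x * pderiv h)"
    by (simp add: pderiv_mult algebra_simps)
  then have "x dvd pderiv f" by simp
  then show "x dvd 1" using assms by (rule dvd_trans)
qed

lemma squarefree_dvdI:
  fixes a b :: "'a::factorial_semiring"
  assumes "squarefree a" and "b \<noteq> 0" and "\<And>p. prime p \<Longrightarrow> p dvd a \<Longrightarrow> p dvd b"
  shows "a dvd b"
proof (rule multiplicity_le_imp_dvd)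
  show a0: "a \<noteq> 0" using assms(1) by auto
  fix p :: 'a assume p: "prime p"
  show "multiplicity p a \<le> multiplicity p b"
  proof (cases "p dvd a")
    case True
    then have "0 < multiplicity p b"
      using p assms(2,3) by (simp add: prime_multiplicity_gt_zero_iff)
    moreover have "multiplicity p a \<le> 1"
      using assms(1) a0 p squarefree_factorial_semiring'' by blast
    ultimately show ?thesis by linarith
  qed (simp add: not_dvd_imp_multiplicity_0)
qed

lemma squarefree_monom_power_card_minus_monom:
  assumes "n \<ge> 1"
  shows "squarefree (monom (1::'a::prime_card mod_ring) 1 ^ CARD('a) ^ n - monom 1 1)"
proof (rule squarefree_if_pderiv_unit)
  have "pderiv (monom (1::'a mod_ring) 1 ^ CARD('a) ^ n) = 0"
    using assms unfolding x_pow_n pderiv_monom by (cases n) simp_all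
  then show "pderiv (monom (1::'a mod_ring) 1 ^ CARD('a) ^ n - monom 1 1) dvd 1"
    by (simp add: pderiv_diff pderiv_monom)
qed

text \<open>If there were no irreducible polynomial of degree n, every prime factor of the squarefree
  polynomial X^(q^n) - X would have degree below n and hence divide some X^(q^c) - X with
  1 \<le> c < n; so X^(q^n) - X would divide the product of these, whose degree is smaller.\<close>

lemma exists_irreducible_poly:
  assumes "n \<ge> 1"
  shows "\<exists>f::'a::prime_card mod_ring poly. irreducible f \<and> degree f = n"
proof (rule ccontr)
  assume no_irreducible: "\<not> ?thesis"
  define q where "q = CARD('a)"
  define X where "X = (monom (1::'a mod_ring) 1)"
  define F where "F = X ^ q ^ n - X"
  define G where "G = (\<Prod>c\<in>{1..<n}. X ^ q ^ c - X)"
  have q: "q \<ge> 2" unfolding q_def using prime_card prime_ge_2_nat by blast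
  have degree_factor: "degree (X ^ q ^ c - X) = q ^ c" if "c \<ge> 1" for c
    unfolding X_def using q that
    by (intro degree_monom_power_minus_monom one_less_power) auto
  have factor_nonzero: "X ^ q ^ c - X \<noteq> 0" if "c \<ge> 1" for c
  proof
    assume "X ^ q ^ c - X = 0"
    then have "q ^ c = 0" using degree_factor[OF that] by simp
    then show False using q by simp
  qed
  have "degree G = (\<Sum>c\<in>{1..<n}. q ^ c)"
    unfolding G_def using factor_nonzero degree_factor
    by (subst degree_prod_eq_sum_degree) auto
  also have "\<dots> \<le> (\<Sum>c<n. q ^ c)" by (rule sum_mono2) auto
  also have "\<dots> < q ^ n" using q by (rule sum_powers_less_power)
  finally have degree_G: "degree G < q ^ n" .
  have "squarefree F"
    unfolding F_def X_def q_def using assms by (rule squarefree_monom_power_card_minus_monom)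
  moreover have "G \<noteq> 0" unfolding G_def using factor_nonzero by auto
  moreover have "p dvd G" if p: "prime p" "p dvd F" for p
  proof -
    have irreducible: "irreducible p"
      using p(1) by (intro prime_elem_imp_irreducible prime_imp_prime_elem)
    have "degree p \<ge> 1"
      using p(1) by (metis is_unit_iff_degree less_one not_le not_prime_0 not_prime_unit)
    moreover have "degree p < n"
    proof -
      have "degree p \<noteq> n" using no_irreducible irreducible by blast
      moreover have "\<not> degree p > n"
        using degree_divisor2[OF irreducible refl assms] p(2) unfolding F_def X_def q_def by blast
      ultimately show ?thesis by linarith
    qed
    ultimately have "X ^ q ^ degree p - X dvd G"
      unfolding G_def by (intro dvd_prodI) auto
    moreover have "p dvd X ^ q ^ degree p - X"
      using degree_divisor1[OF irreducible refl] unfolding X_def q_def .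
    ultimately show ?thesis by (rule dvd_trans[rotated])
  qed
  ultimately have "F dvd G" by (rule squarefree_dvdI)
  then have "degree F \<le> degree G" using \<open>G \<noteq> 0\<close> by (rule dvd_imp_degree_le)
  then show False using degree_G degree_factor[OF assms] unfolding F_def by linarith
qed

lemma card_polys_degree_less:
  assumes "m \<ge> 1"
  shows "card {f::'a::prime_card mod_ring poly. degree f < m} = CARD('a) ^ m"
proof -
  obtain f :: "'a mod_ring poly" where f: "irreducible f" "degree f = m"
    using exists_irreducible_poly[OF assms] by blast
  \<comment> \<open>The polynomials of degree below m form the carrier of the residue field modulo f.\<close>
  interpret poly_mod_type_irr "CARD('a)" f by unfold_locales (auto simp: f)
  show ?thesis using card_carrier_irr f unfolding carrier_irr_def by simp
qed

lemma finite_polys_degree_less: "finite {f::'a::prime_card mod_ring poly. degree f < m}"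
proof (cases "m = 0")
  case False
  then have "card {f::'a mod_ring poly. degree f < m} > 0"
    using card_polys_degree_less[where 'a = 'a, of m] by simp
  then show ?thesis by (rule card_ge_0_finite)
qed simp

lemma coprime_if_irreducible_degree_neq:
  fixes f h :: "'a::field poly"
  assumes "irreducible f" and "irreducible h" and "degree f \<noteq> degree h"
  shows "Rings.coprime f h"
proof (rule Rings.coprimeI)
  fix d assume d: "d dvd f" "d dvd h"
  show "is_unit d"
  proof (rule ccontr)
    assume "\<not> is_unit d"
    then have "f dvd d" "h dvd d" using d assms(1,2) irreducibleD' by blast+
    with d have "f dvd h" "h dvd f" by (auto intro: dvd_trans)
    moreover have "f \<noteq> 0" "h \<noteq> 0" using assms(1,2) by auto
    ultimately have "degree f = degree h" by (simp add: dvd_imp_degree_le order_antisym)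
    with assms(3) show False ..
  qed
qed

lemma prod_dvd_if_pairwise_coprime:
  fixes f :: "'b \<Rightarrow> 'a::semiring_gcd"
  assumes "finite S" and "\<And>i. i \<in> S \<Longrightarrow> f i dvd x"
    and "\<And>i j. i \<in> S \<Longrightarrow> j \<in> S \<Longrightarrow> i \<noteq> j \<Longrightarrow> Rings.coprime (f i) (f j)"
  shows "prod f S dvd x"
  using assms
proof (induction S rule: finite_induct)
  case (insert i S)
  then have "Rings.coprime (f i) (prod f S)" by (intro prod_coprime_right) blast
  with insert show ?case by (simp add: divides_mult)
qed simp

section \<open>Binary vectors and codes\<close>

type_synonym gf2 = "bool mod_ring"

lemma gf2_cases: "(x::gf2) = 0 \<or> x = 1"
proof -
  have "(UNIV::gf2 set) = {0, 1}"
    by (rule card_subset_eq[symmetric]) simp_all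
  then show ?thesis by blast
qed

lemma gf2_two [simp]: "(2::gf2) = 0"
  using of_nat_card_eq_0[where 'a = bool] by simp

lemma gf2_add_self [simp]: "(x::gf2) + x = 0"
  using gf2_cases[of x] by auto

lemma gf2_add_neq_0_iff: "(x::gf2) + y \<noteq> 0 \<longleftrightarrow> (x \<noteq> 0) \<noteq> (y \<noteq> 0)"
  using gf2_cases[of x] gf2_cases[of y] by auto

lemma gf2_poly_add_self [simp]: "(f::gf2 poly) + f = 0"
  by (rule poly_eqI) (simp only: coeff_add gf2_add_self coeff_0)

lemma gf2_poly_add_add_cancel [simp]: "(f::gf2 poly) + g + g = f"
  by (simp add: add.assoc)

text \<open>A polynomial of degree below k stands for a vector in GF(2)^k; the standard bilinear form
  is returned as a truth value, True encoding 1.\<close>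

definition pairing :: "nat \<Rightarrow> gf2 poly \<Rightarrow> gf2 poly \<Rightarrow> bool" where
  "pairing k a x \<longleftrightarrow> (\<Sum>j<k. coeff a j * coeff x j) \<noteq> 0"

lemma pairing_add_right: "pairing k a (x + y) \<longleftrightarrow> pairing k a x \<noteq> pairing k a y"
  by (simp only: pairing_def coeff_add distrib_left sum.distrib gf2_add_neq_0_iff)

lemma pairing_add_left: "pairing k (a + b) x \<longleftrightarrow> pairing k a x \<noteq> pairing k b x"
  by (simp only: pairing_def coeff_add distrib_right sum.distrib gf2_add_neq_0_iff)

lemma pairing_zero [simp]: "\<not> pairing k a 0" "\<not> pairing k 0 x"
  by (simp_all add: pairing_def)

lemma pairing_monom_right:
  "pairing k a (monom 1 m) \<longleftrightarrow> m < k \<and> coeff a m \<noteq> 0"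
  by (simp add: pairing_def coeff_monom if_distrib[of "\<lambda>z. _ * z"] sum.delta cong: if_cong)

lemma pairing_monom_left:
  "pairing k (monom 1 m) x \<longleftrightarrow> m < k \<and> coeff x m \<noteq> 0"
  by (simp add: pairing_def coeff_monom if_distrib[of "\<lambda>z. z * _"] sum.delta cong: if_cong)

lemma card_pairing_half:
  assumes "finite W" and "\<And>x y. x \<in> W \<Longrightarrow> y \<in> W \<Longrightarrow> x + y \<in> W"
    and "x\<^sub>0 \<in> W" and "pairing k a x\<^sub>0"
  shows "2 * card {x\<in>W. pairing k a x} = card W"
proof -
  define A where "A = {x\<in>W. pairing k a x}"
  define B where "B = {x\<in>W. \<not> pairing k a x}"
  \<comment> \<open>Translation by a witness swaps A and B.\<close>
  have inj: "inj_on (\<lambda>x. x + x\<^sub>0) X" for X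
    by (rule inj_onI) (metis gf2_poly_add_add_cancel)
  have "card A \<le> card B"
    by (rule card_inj_on_le[OF inj]) (use assms pairing_add_right in \<open>auto simp: A_def B_def\<close>)
  moreover have "card B \<le> card A"
    by (rule card_inj_on_le[OF inj]) (use assms pairing_add_right in \<open>auto simp: A_def B_def\<close>)
  moreover have "W = A \<union> B" "A \<inter> B = {}" unfolding A_def B_def by auto
  then have "card W = card A + card B" using assms(1) by (simp add: card_Un_disjoint)
  ultimately show ?thesis unfolding A_def by simp
qed

lemma hweight_conv_card: "hweight v = card {i. i < length v \<and> v ! i}"
  unfolding hweight_def by (simp add: length_filter_conv_card)

lemma hweight_bin_add:
  assumes "length x = n" and "length y = n"
  shows "hweight (bin_add x y) + 2 * card {i. i < n \<and> x ! i \<and> y ! i} = hweight x + hweight y"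
proof -
  define A where "A = {i. i < n \<and> x ! i}"
  define B where "B = {i. i < n \<and> y ! i}"
  have finite: "finite A" "finite B" unfolding A_def B_def by auto
  have "hweight (bin_add x y) = card ((A - B) \<union> (B - A))"
    using assms unfolding hweight_conv_card A_def B_def bin_add_def
    by (auto intro!: arg_cong[where f = card])
  moreover have "card (A \<union> B) = card ((A - B) \<union> (B - A)) + card (A \<inter> B)"
  proof -
    have "card (A \<union> B) = card (((A - B) \<union> (B - A)) \<union> (A \<inter> B))"
      by (rule arg_cong[where f = card]) auto
    also have "\<dots> = card ((A - B) \<union> (B - A)) + card (A \<inter> B)"
      by (rule card_Un_disjoint) (use finite in auto)
    finally show ?thesis .
  qed
  ultimately have "hweight (bin_add x y) + 2 * card (A \<inter> B) = card A + card B"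
    using finite card_Un_Int[of A B] by simp
  moreover have "{i. i < n \<and> x ! i \<and> y ! i} = A \<inter> B" unfolding A_def B_def by auto
  moreover have "hweight x = card A" "hweight y = card B"
    using assms unfolding hweight_conv_card A_def B_def by simp_all
  ultimately show ?thesis by simp
qed

lemma self_orthogonal_if_doubly_even:
  assumes "bin_linear_code n C" and "\<And>c. c \<in> C \<Longrightarrow> 4 dvd hweight c"
  shows "self_orthogonal n C"
  unfolding self_orthogonal_def dual_code_def
proof safe
  fix x y assume xy: "x \<in> C" "y \<in> C"
  have lengths: "length x = n" "length y = n" and "bin_add x y \<in> C"
    using assms(1) xy unfolding bin_linear_code_def by auto
  then have "4 dvd hweight (bin_add x y)" "4 dvd hweight x" "4 dvd hweight y"
    using assms(2) xy by auto
  then have "4 dvd 2 * card {i. i < n \<and> x ! i \<and> y ! i}"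
    using hweight_bin_add[OF lengths] by (metis dvd_add dvd_add_right_iff)
  then show "length x = n" "bin_inner n x y \<Longrightarrow> False"
    using lengths unfolding bin_inner_def by presburger+
qed

lemma bin_add_self: "bin_add v v = Defs.zero_vec (length v)"
  unfolding bin_add_def Defs.zero_vec_def by (simp add: zip_same_conv_map o_def map_replicate_const)

section \<open>The Griesmer sum\<close>

lemma ceiling_divide_eq:
  fixes b d D S :: nat
  assumes "b > 0" and "d + D = S * b"
  shows "\<lceil>real d / real b\<rceil> = int S - int (D div b)"
proof -
  have "real d / real b = - (real D / real b) + of_int (int S)"
    using assms by (simp add: field_simps flip: of_nat_add of_nat_mult)
  then have "\<lceil>real d / real b\<rceil> = \<lceil>- (real D / real b)\<rceil> + int S"
    by (simp only: ceiling_add_of_int)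
  then show ?thesis by (simp add: ceiling_minus floor_divide_of_nat_eq)
qed

lemma sum_powers_div_power:
  assumes "finite E"
  shows "(\<Sum>e\<in>E. (2::nat) ^ e) div 2 ^ i = (\<Sum>e\<in>E. if i \<le> e then 2 ^ (e - i) else 0)"
proof -
  define H where "H = (\<Sum>e\<in>E. if i \<le> e then (2::nat) ^ (e - i) else 0)"
  define L where "L = (\<Sum>e\<in>{e\<in>E. e < i}. (2::nat) ^ e)"
  have "(\<Sum>e\<in>E. (2::nat) ^ e) =
      (\<Sum>e\<in>E. (if i \<le> e then 2 ^ i * 2 ^ (e - i) else 0) + (if e < i then 2 ^ e else 0))"
    by (rule sum.cong[OF refl]) (auto simp flip: power_add)
  also have "\<dots> = 2 ^ i * H + L"
    unfolding H_def L_def sum.distrib sum_distrib_left using assms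
    by (simp add: sum.inter_filter if_distrib[of "\<lambda>x. 2 ^ i * x"] cong: if_cong)
  finally have "(\<Sum>e\<in>E. (2::nat) ^ e) = 2 ^ i * H + L" .
  moreover have "L < 2 ^ i"
    unfolding L_def by (rule sum_distinct_powers_less_power) auto
  ultimately show ?thesis unfolding H_def by simp
qed

lemma sum_div_powers_sum_powers:
  assumes "E \<subseteq> {..<k}"
  shows "(\<Sum>i<k. (\<Sum>e\<in>E. (2::nat) ^ e) div 2 ^ i) = (\<Sum>e\<in>E. 2 ^ (e + 1) - 1)"
proof -
  have "finite E" using assms finite_subset by blast
  then have "(\<Sum>i<k. (\<Sum>e\<in>E. (2::nat) ^ e) div 2 ^ i) =
      (\<Sum>i<k. \<Sum>e\<in>E. if i \<le> e then 2 ^ (e - i) else 0)"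
    by (simp add: sum_powers_div_power)
  also have "\<dots> = (\<Sum>e\<in>E. \<Sum>i<k. if i \<le> e then 2 ^ (e - i) else 0)"
    by (rule sum.swap)
  also have "\<dots> = (\<Sum>e\<in>E. 2 ^ (e + 1) - 1)"
  proof (rule sum.cong[OF refl])
    fix e assume "e \<in> E"
    then have "{i\<in>{..<k}. i \<le> e} = {..<Suc e}" using assms by auto
    then have "(\<Sum>i<k. if i \<le> e then (2::nat) ^ (e - i) else 0) = (\<Sum>i<Suc e. 2 ^ (e - i))"
      by (simp flip: sum.inter_filter)
    also have "\<dots> = (\<Sum>i<Suc e. 2 ^ i)"
      using sum.nat_diff_reindex[of "\<lambda>i. (2::nat) ^ i" "Suc e"] by simp
    also have "\<dots> = 2 ^ (e + 1) - 1" by (simp add: lessThan_atLeast0 sum_power2)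
    finally show "(\<Sum>i<k. if i \<le> e then (2::nat) ^ (e - i) else 0) = 2 ^ (e + 1) - 1" .
  qed
  finally show ?thesis .
qed

text \<open>With D the sum of the 2^e, the i-th Griesmer term is s 2^(k-1-i) minus D div 2^i, and
  summing D div 2^i over all i counts each binary digit 2^e of D as 2^e + ... + 1.\<close>

lemma griesmer_paramsI:
  assumes "E \<subseteq> {..<k}" and "k \<ge> 1"
    and d: "d + (\<Sum>e\<in>E. 2 ^ e) = s * 2 ^ (k - 1)"
    and n: "n + (\<Sum>e\<in>E. 2 ^ (e + 1) - 1) = s * (2 ^ k - 1)"
  shows "griesmer_params n k d"
proof -
  define D where "D = (\<Sum>e\<in>E. (2::nat) ^ e)"
  have ceiling: "\<lceil>real d / 2 ^ i\<rceil> = int (s * 2 ^ (k - Suc i)) - int (D div 2 ^ i)"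
    if "i < k" for i
  proof -
    have "d + D = s * 2 ^ (k - Suc i) * 2 ^ i"
      using d that unfolding D_def by (simp add: mult.assoc flip: power_add)
    then show ?thesis using ceiling_divide_eq[of "2 ^ i"] by simp
  qed
  have sum_s: "(\<Sum>i<k. s * 2 ^ (k - Suc i)) = s * (2 ^ k - 1)"
    using sum.nat_diff_reindex[of "\<lambda>i. (2::nat) ^ i" k]
    by (simp add: lessThan_atLeast0 sum_power2 flip: sum_distrib_left)
  have "(\<Sum>i<k. \<lceil>real d / 2 ^ i\<rceil>) =
      (\<Sum>i<k. int (s * 2 ^ (k - Suc i))) - (\<Sum>i<k. int (D div 2 ^ i))"
    by (simp add: ceiling sum_subtractf)
  also have "\<dots> = int (s * (2 ^ k - 1)) - int (\<Sum>i<k. D div 2 ^ i)"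
    by (simp only: sum_s flip: of_nat_sum)
  also have "(\<Sum>i<k. D div 2 ^ i) = (\<Sum>e\<in>E. 2 ^ (e + 1) - 1)"
    unfolding D_def using assms(1) by (rule sum_div_powers_sum_powers)
  also have "int (s * (2 ^ k - 1)) = int n + int (\<Sum>e\<in>E. 2 ^ (e + 1) - 1)"
    using n by (metis of_nat_add)
  finally show ?thesis unfolding griesmer_params_def by simp
qed

section \<open>The anticode construction\<close>

lemma length_filter_replicate: "length (filter P (replicate n x)) = (if P x then n else 0)"
  by (induction n) auto

lemma sum_le_sum_initial_segment:
  fixes u :: "nat \<Rightarrow> 'a::ordered_comm_monoid_add"
  assumes antimono: "\<And>i j. 1 \<le> i \<Longrightarrow> i \<le> j \<Longrightarrow> j \<le> p \<Longrightarrow> u j \<le> u i"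
    and "S \<subseteq> {1..p}"
  shows "sum u S \<le> (\<Sum>i = 1..card S. u i)"
  using assms(2)
proof (induction "card S" arbitrary: S)
  case 0
  then have "S = {}" using finite_subset by fastforce
  then show ?case by simp
next
  case (Suc m S)
  have "finite S" using Suc.prems finite_subset by blast
  moreover have "S \<noteq> {}" using Suc.hyps(2) by auto
  ultimately have "Max S \<in> S" and S_le: "S \<subseteq> {1..Max S}" using Suc.prems by auto
  have "Suc m \<le> Max S" using card_mono[OF _ S_le] Suc.hyps(2) by simp
  moreover have "Max S \<le> p" using \<open>Max S \<in> S\<close> Suc.prems by auto
  ultimately have max: "u (Max S) \<le> u (Suc m)" by (intro antimono) auto
  have "card (S - {Max S}) = m"
    using Suc.hyps(2) \<open>finite S\<close> \<open>Max S \<in> S\<close> by simp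
  then have rest: "sum u (S - {Max S}) \<le> (\<Sum>i = 1..m. u i)"
    using Suc.hyps(1)[of "S - {Max S}"] Suc.prems by auto
  have "sum u S = u (Max S) + sum u (S - {Max S})"
    using \<open>finite S\<close> \<open>Max S \<in> S\<close> by (rule sum.remove)
  also have "\<dots> \<le> u (Suc m) + (\<Sum>i = 1..m. u i)"
    using max rest by (rule add_mono)
  also have "\<dots> = (\<Sum>i = 1..card S. u i)"
    using Suc.hyps(2) by (simp add: add.commute flip: Suc.hyps(2))
  finally show ?case .
qed

definition irreducible_of_degree :: "nat \<Rightarrow> 'a::prime_card mod_ring poly" where
  "irreducible_of_degree n = (SOME f. irreducible f \<and> degree f = n)"

lemma irreducible_of_degree:
  fixes n :: nat
  defines "f \<equiv> irreducible_of_degree n :: 'a::prime_card mod_ring poly"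
  assumes "n \<ge> 1"
  shows "irreducible f" and "degree f = n"
proof -
  have "irreducible f \<and> degree f = n"
    unfolding f_def irreducible_of_degree_def
    by (rule someI_ex) (rule exists_irreducible_poly[OF assms(2)])
  then show "irreducible f" "degree f = n" by auto
qed

locale anticode_construction =
  fixes k s p :: nat and u :: "nat \<Rightarrow> nat"
  assumes k_ge_4: "k \<ge> 4" and s_pos: "s \<ge> 1"
    and u_range: "\<forall>i\<in>{1..p}. 3 \<le> u i \<and> u i < k"
    and u_decreasing: "\<forall>i\<in>{1..<p}. u i > u (i + 1)"
    and sum_u_le: "(\<Sum>i = 1..min (s + 1) p. u i) \<le> s * k"
begin

lemma u_ge_3: "i \<in> {1..p} \<Longrightarrow> 3 \<le> u i"
  and u_less_k: "i \<in> {1..p} \<Longrightarrow> u i < k"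
  using u_range by auto

lemma u_less:
  assumes "1 \<le> i" and "i < j" and "j \<le> p"
  shows "u j < u i"
proof -
  have "Suc i \<le> j" using assms(2) by simp
  then show ?thesis using assms(3)
  proof (induction j rule: dec_induct)
    case base
    then show ?case using u_decreasing assms(1) by simp
  next
    case (step j)
    then have "u (Suc j) < u j" using u_decreasing assms(1) by simp
    with step show ?case by simp
  qed
qed

lemma u_le: "1 \<le> i \<Longrightarrow> i \<le> j \<Longrightarrow> j \<le> p \<Longrightarrow> u j \<le> u i"
  using u_less by (cases "i = j") (auto simp: less_imp_le)

lemma u_neq: "i \<in> {1..p} \<Longrightarrow> j \<in> {1..p} \<Longrightarrow> i \<noteq> j \<Longrightarrow> u i \<noteq> u j"
  using u_less by (cases i j rule: linorder_cases) fastforce+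

lemma inj_on_u_minus_1: "inj_on (\<lambda>i. u i - 1) {1..p}"
proof (rule inj_onI)
  fix i j assume ij: "i \<in> {1..p}" "j \<in> {1..p}" "u i - 1 = u j - 1"
  then have "u i = u j" using u_ge_3[of i] u_ge_3[of j] by simp
  with ij show "i = j" using u_neq by blast
qed

definition generator :: "nat \<Rightarrow> gf2 poly" where
  "generator i = irreducible_of_degree (k - u i)"

lemma irreducible_generator: "i \<in> {1..p} \<Longrightarrow> irreducible (generator i)"
  and degree_generator: "i \<in> {1..p} \<Longrightarrow> degree (generator i) = k - u i"
  unfolding generator_def using irreducible_of_degree[where 'a = bool, of "k - u i"] u_less_k[of i] by simp_all

lemma generator_nonzero: "i \<in> {1..p} \<Longrightarrow> generator i \<noteq> 0"
  using irreducible_generator by auto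

lemma coprime_generators:
  assumes "i \<in> {1..p}" and "j \<in> {1..p}" and "i \<noteq> j"
  shows "Rings.coprime (generator i) (generator j)"
proof (rule coprime_if_irreducible_degree_neq)
  show "irreducible (generator i)" "irreducible (generator j)"
    using assms(1,2) by (simp_all add: irreducible_generator)
  show "degree (generator i) \<noteq> degree (generator j)"
    using assms u_neq u_less_k degree_generator by force
qed

definition ambient :: "gf2 poly set" where
  "ambient = {x. degree x < k}"

definition subspace :: "nat \<Rightarrow> gf2 poly set" where
  "subspace i = (\<lambda>f. f * generator i) ` {f. degree f < u i}"

definition coverage :: "gf2 poly \<Rightarrow> nat" where
  "coverage x = card {i\<in>{1..p}. x \<in> subspace i}"

definition nonzero_vectors :: "gf2 poly list" where
  "nonzero_vectors = (SOME xs. set xs = ambient - {0} \<and> distinct xs)"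

definition columns :: "gf2 poly list" where
  "columns = concat (map (\<lambda>x. replicate (s - coverage x) x) nonzero_vectors)"

definition codeword :: "gf2 poly \<Rightarrow> bool list" where
  "codeword a = map (pairing k a) columns"

definition code :: "bool list set" where
  "code = codeword ` ambient"

lemma finite_ambient: "finite ambient"
  unfolding ambient_def by (rule finite_polys_degree_less)

lemma card_ambient: "card ambient = 2 ^ k"
  unfolding ambient_def using k_ge_4 card_polys_degree_less[where 'a = bool, of k] by simp

lemma ambient_add: "x \<in> ambient \<Longrightarrow> y \<in> ambient \<Longrightarrow> x + y \<in> ambient"
  unfolding ambient_def by (auto intro: degree_add_less)

lemma zero_in_ambient: "0 \<in> ambient"
  unfolding ambient_def using k_ge_4 by auto

lemma monom_in_ambient: "m < k \<Longrightarrow> monom 1 m \<in> ambient"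
  unfolding ambient_def by (simp add: degree_monom_eq)

lemma subspace_subset_ambient:
  assumes i: "i \<in> {1..p}"
  shows "subspace i \<subseteq> ambient"
proof
  fix x assume "x \<in> subspace i"
  then obtain f where f: "degree f < u i" "x = f * generator i" unfolding subspace_def by auto
  show "x \<in> ambient"
  proof (cases "f = 0")
    case False
    then have "degree x = degree f + (k - u i)"
      using f generator_nonzero[OF i] degree_generator[OF i] by (simp add: degree_mult_eq)
    then show ?thesis using f(1) u_less_k[OF i] unfolding ambient_def by simp
  qed (simp add: f zero_in_ambient)
qed

lemma subspace_add: "x \<in> subspace i \<Longrightarrow> y \<in> subspace i \<Longrightarrow> x + y \<in> subspace i"
proof -
  assume "x \<in> subspace i" "y \<in> subspace i"
  then obtain f h where "degree f < u i" "x = f * generator i" "degree h < u i" "y = h * generator i"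
    unfolding subspace_def by auto
  then have "degree (f + h) < u i" "x + y = (f + h) * generator i"
    by (simp_all add: degree_add_less distrib_right)
  then show "x + y \<in> subspace i" unfolding subspace_def by blast
qed

lemma zero_in_subspace: "i \<in> {1..p} \<Longrightarrow> 0 \<in> subspace i"
  unfolding subspace_def using u_ge_3[of i] by (auto intro!: image_eqI[of _ _ 0])

lemma finite_subspace: "finite (subspace i)"
  unfolding subspace_def by (intro finite_imageI finite_polys_degree_less)

lemma card_subspace:
  assumes i: "i \<in> {1..p}"
  shows "card (subspace i) = 2 ^ u i"
proof -
  have "inj_on (\<lambda>f. f * generator i) {f. degree f < u i}"
    using generator_nonzero[OF i] by (auto intro: inj_onI)
  then have "card (subspace i) = card {f::gf2 poly. degree f < u i}"
    unfolding subspace_def by (rule card_image)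
  also have "\<dots> = 2 ^ u i" using u_ge_3[OF i] card_polys_degree_less[where 'a = bool, of "u i"] by simp
  finally show ?thesis .
qed

lemma generator_dvd: "x \<in> subspace i \<Longrightarrow> generator i dvd x"
  unfolding subspace_def by auto

lemma prod_generators_dvd:
  assumes "S \<subseteq> {1..p}" and "\<And>i. i \<in> S \<Longrightarrow> x \<in> subspace i"
  shows "prod generator S dvd x"
proof (rule prod_dvd_if_pairwise_coprime)
  show "finite S" using assms(1) by (rule finite_subset) simp
  show "generator i dvd x" if "i \<in> S" for i
    using assms(2)[OF that] by (rule generator_dvd)
  show "Rings.coprime (generator i) (generator j)" if "i \<in> S" "j \<in> S" "i \<noteq> j" for i j
    using that assms(1) coprime_generators by blast
qed

lemma degree_prod_generators:
  assumes "S \<subseteq> {1..p}"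
  shows "degree (prod generator S) + sum u S = card S * k"
proof -
  have "degree (prod generator S) = (\<Sum>i\<in>S. degree (generator i))"
    by (rule degree_prod_eq_sum_degree) (use assms generator_nonzero in blast)
  then have "degree (prod generator S) + sum u S = (\<Sum>i\<in>S. degree (generator i) + u i)"
    by (simp add: sum.distrib)
  also have "\<dots> = (\<Sum>i\<in>S. k)"
  proof (rule sum.cong[OF refl])
    fix i assume "i \<in> S"
    then have i: "i \<in> {1..p}" using assms by blast
    show "degree (generator i) + u i = k"
      using degree_generator[OF i] u_less_k[OF i] by simp
  qed
  finally show ?thesis by simp
qed

lemma coverage_le:
  assumes x: "x \<in> ambient" "x \<noteq> 0"
  shows "coverage x \<le> s"
proof (rule ccontr)
  assume "\<not> coverage x \<le> s"
  then have "s + 1 \<le> card {i\<in>{1..p}. x \<in> subspace i}" unfolding coverage_def by simp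
  then obtain S where S: "S \<subseteq> {i\<in>{1..p}. x \<in> subspace i}" "card S = s + 1"
    by (rule obtain_subset_with_card_n)
  then have S_range: "S \<subseteq> {1..p}" by auto
  then have "s + 1 \<le> p" using card_mono[OF _ S_range] S(2) by simp
  have "sum u S \<le> (\<Sum>i = 1..s + 1. u i)"
    using sum_le_sum_initial_segment[OF u_le S_range] S(2) by simp
  also have "\<dots> \<le> s * k" using sum_u_le \<open>s + 1 \<le> p\<close> by simp
  finally have "sum u S \<le> s * k" .
  moreover have "prod generator S dvd x"
    using S(1) by (intro prod_generators_dvd[OF S_range]) blast
  then have "degree (prod generator S) \<le> degree x" using x(2) by (rule dvd_imp_degree_le)
  moreover have "degree x < k" using x(1) unfolding ambient_def by simp
  ultimately show False using degree_prod_generators[OF S_range] S(2) by simp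
qed

lemma nonzero_vectors: "set nonzero_vectors = ambient - {0}" "distinct nonzero_vectors"
proof -
  have "\<exists>xs. set xs = ambient - {0} \<and> distinct xs"
    using finite_ambient by (simp add: finite_distinct_list)
  from someI_ex[OF this] show "set nonzero_vectors = ambient - {0}" "distinct nonzero_vectors"
    unfolding nonzero_vectors_def by auto
qed

lemma sum_coverage:
  assumes "finite A"
  shows "(\<Sum>x\<in>A. coverage x) = (\<Sum>i = 1..p. card {x\<in>A. x \<in> subspace i})"
proof -
  have "coverage x = (\<Sum>i = 1..p. if x \<in> subspace i then 1 else 0)" for x
    unfolding coverage_def using sum.inter_filter[of "{1..p}" "\<lambda>_. 1::nat"] by simp
  then have "(\<Sum>x\<in>A. coverage x) = (\<Sum>x\<in>A. \<Sum>i = 1..p. if x \<in> subspace i then 1 else 0)"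
    by simp
  also have "\<dots> = (\<Sum>i = 1..p. \<Sum>x\<in>A. if x \<in> subspace i then 1 else 0)"
    by (rule sum.swap)
  also have "\<dots> = (\<Sum>i = 1..p. card {x\<in>A. x \<in> subspace i})"
    using sum.inter_filter[OF assms, of "\<lambda>_. 1::nat"] by simp
  finally show ?thesis .
qed

lemma length_filter_columns_eq:
  "length (filter P columns) = (\<Sum>x\<in>ambient - {0}. if P x then s - coverage x else 0)"
proof -
  have "length (filter P columns) = (\<Sum>x\<leftarrow>nonzero_vectors. if P x then s - coverage x else 0)"
    unfolding columns_def by (simp add: filter_concat length_concat o_def length_filter_replicate)
  also have "\<dots> = (\<Sum>x\<in>ambient - {0}. if P x then s - coverage x else 0)"
    using nonzero_vectors by (simp add: sum_list_distinct_conv_sum_set)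
  finally show ?thesis .
qed

text \<open>Double counting: each nonzero x with P x is either a column, s - coverage x times, or lies
  in coverage x of the subspaces.\<close>

lemma length_filter_columns:
  assumes "\<not> P 0"
  shows "length (filter P columns) + (\<Sum>i = 1..p. card {x\<in>subspace i. P x}) =
    s * card {x\<in>ambient. P x}"
proof -
  define VP where "VP = {x\<in>ambient. P x}"
  have "finite VP" unfolding VP_def using finite_ambient by simp
  have "{x\<in>ambient - {0}. P x} = VP" unfolding VP_def using assms by auto
  then have "length (filter P columns) = (\<Sum>x\<in>VP. s - coverage x)"
    unfolding length_filter_columns_eq using finite_ambient by (simp flip: sum.inter_filter)
  moreover have "(\<Sum>x\<in>VP. coverage x) = (\<Sum>i = 1..p. card {x\<in>subspace i. P x})"
  proof -
    have "{x\<in>VP. x \<in> subspace i} = {x\<in>subspace i. P x}" if "i \<in> {1..p}" for i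
      unfolding VP_def using subspace_subset_ambient[OF that] by auto
    then show ?thesis using sum_coverage[OF \<open>finite VP\<close>] by simp
  qed
  moreover have "(\<Sum>x\<in>VP. s - coverage x) + (\<Sum>x\<in>VP. coverage x) = (\<Sum>x\<in>VP. s)"
    unfolding sum.distrib[symmetric]
  proof (rule sum.cong[OF refl])
    fix x assume "x \<in> VP"
    then have "x \<in> ambient" "x \<noteq> 0" using assms unfolding VP_def by auto
    then show "s - coverage x + coverage x = s" using coverage_le by simp
  qed
  ultimately show ?thesis unfolding VP_def by simp
qed

lemma length_columns: "length columns + (\<Sum>i = 1..p. 2 ^ u i - 1) = s * (2 ^ k - 1)"
proof -
  have "card {x\<in>subspace i. x \<noteq> 0} = 2 ^ u i - 1" if "i \<in> {1..p}" for i
  proof -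
    have "{x\<in>subspace i. x \<noteq> 0} = subspace i - {0}" by auto
    then show ?thesis
      using card_subspace[OF that] zero_in_subspace[OF that] finite_subspace
      by (simp add: card_Diff_singleton)
  qed
  moreover have "card {x\<in>ambient. x \<noteq> 0} = 2 ^ k - 1"
  proof -
    have "{x\<in>ambient. x \<noteq> 0} = ambient - {0}" by auto
    then show ?thesis
      using card_ambient zero_in_ambient finite_ambient by (simp add: card_Diff_singleton)
  qed
  moreover have "filter (\<lambda>x. x \<noteq> 0) columns = columns"
    using nonzero_vectors by (auto simp: columns_def filter_id_conv)
  ultimately show ?thesis
    using length_filter_columns[of "\<lambda>x. x \<noteq> 0"] by simp
qed

lemma card_pairing_ambient:
  assumes "a \<in> ambient" "a \<noteq> 0"
  shows "card {x\<in>ambient. pairing k a x} = 2 ^ (k - 1)"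
proof -
  have "degree a < k" using assms unfolding ambient_def by simp
  then have "2 * card {x\<in>ambient. pairing k a x} = 2 ^ k"
    using card_pairing_half[OF finite_ambient ambient_add monom_in_ambient] assms(2) card_ambient
    by (simp add: pairing_monom_right)
  also have "\<dots> = 2 * 2 ^ (k - 1)" using k_ge_4 by (simp flip: power_Suc)
  finally show ?thesis by simp
qed

lemma card_pairing_subspace:
  assumes i: "i \<in> {1..p}"
  shows "card {x\<in>subspace i. pairing k a x} = (if \<exists>x\<in>subspace i. pairing k a x then 2 ^ (u i - 1) else 0)"
proof (cases "\<exists>x\<in>subspace i. pairing k a x")
  case True
  then obtain x\<^sub>0 where "x\<^sub>0 \<in> subspace i" "pairing k a x\<^sub>0" by blast
  then have "2 * card {x\<in>subspace i. pairing k a x} = 2 ^ u i"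
    using card_pairing_half[OF finite_subspace subspace_add] card_subspace[OF i] by simp
  also have "\<dots> = 2 * 2 ^ (u i - 1)" using u_ge_3[OF i] by (simp flip: power_Suc)
  finally show ?thesis using True by simp
next
  case False
  then have empty: "{x\<in>subspace i. pairing k a x} = {}" by auto
  show ?thesis unfolding empty using False by simp
qed

lemma hweight_codeword:
  assumes "a \<in> ambient" "a \<noteq> 0"
  shows "hweight (codeword a) + (\<Sum>i = 1..p. if \<exists>x\<in>subspace i. pairing k a x then 2 ^ (u i - 1) else 0)
    = s * 2 ^ (k - 1)"
  using length_filter_columns[of "pairing k a"] card_pairing_ambient[OF assms] card_pairing_subspace
  unfolding codeword_def hweight_def by (simp add: filter_map o_def)

lemma pairing_top_subspace:
  assumes i: "i \<in> {1..p}"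
  shows "\<exists>x\<in>subspace i. pairing k (monom 1 (k - 1)) x"
proof
  define x where "x = monom 1 (u i - 1) * generator i"
  have "degree (monom (1::gf2) (u i - 1)) < u i" using u_ge_3[OF i] by (simp add: degree_monom_eq)
  then show "x \<in> subspace i" unfolding subspace_def x_def by blast
  have "coeff x (k - 1) = coeff (generator i) (k - 1 - (u i - 1))"
    using u_ge_3[OF i] u_less_k[OF i] unfolding x_def by (simp add: coeff_monom_mult)
  also have "k - 1 - (u i - 1) = degree (generator i)"
    using u_ge_3[OF i] u_less_k[OF i] degree_generator[OF i] by simp
  finally have "coeff x (k - 1) \<noteq> 0" using generator_nonzero[OF i] by simp
  then show "pairing k (monom 1 (k - 1)) x"
    using k_ge_4 by (simp add: pairing_monom_left)
qed

lemma hweight_codeword_top: "hweight (codeword (monom 1 (k - 1))) + (\<Sum>i = 1..p. 2 ^ (u i - 1)) = s * 2 ^ (k - 1)"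
  using hweight_codeword[of "monom 1 (k - 1)"] monom_in_ambient[of "k - 1"] k_ge_4 pairing_top_subspace
  by simp

lemma hweight_codeword_top_le:
  assumes "a \<in> ambient" "a \<noteq> 0"
  shows "hweight (codeword (monom 1 (k - 1))) \<le> hweight (codeword a)"
proof -
  have "(\<Sum>i = 1..p. if \<exists>x\<in>subspace i. pairing k a x then 2 ^ (u i - 1) else 0) \<le> (\<Sum>i = 1..p. (2::nat) ^ (u i - 1))"
    by (intro sum_mono) auto
  then show ?thesis using hweight_codeword[OF assms] hweight_codeword_top by linarith
qed

lemma sum_power_u_minus_1_less: "(\<Sum>i = 1..p. (2::nat) ^ (u i - 1)) < 2 ^ (k - 1)"
proof -
  have "(\<Sum>i = 1..p. (2::nat) ^ (u i - 1)) = (\<Sum>e\<in>(\<lambda>i. u i - 1) ` {1..p}. 2 ^ e)"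
    using sum.reindex[OF inj_on_u_minus_1, of "\<lambda>e. (2::nat) ^ e"] by simp
  also have "\<dots> < 2 ^ (k - 1)"
    using u_less_k u_ge_3 by (intro sum_distinct_powers_less_power) fastforce+
  finally show ?thesis .
qed

lemma hweight_codeword_top_pos: "hweight (codeword (monom 1 (k - 1))) > 0"
proof -
  have "(2::nat) ^ (k - 1) \<le> s * 2 ^ (k - 1)" using s_pos by simp
  then show ?thesis using hweight_codeword_top sum_power_u_minus_1_less by linarith
qed

lemma four_dvd_hweight_codeword:
  assumes "a \<in> ambient"
  shows "4 dvd hweight (codeword a)"
proof (cases "a = 0")
  case True
  then show ?thesis by (simp add: codeword_def hweight_def)
next
  case False
  have four_dvd: "(4::nat) dvd 2 ^ j" if "j \<ge> 2" for j
    using le_imp_power_dvd[OF that, of "2::nat"] by simp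
  have total: "4 dvd s * 2 ^ (k - 1)" using four_dvd[of "k - 1"] k_ge_4 by simp
  have removed: "4 dvd (\<Sum>i = 1..p. if \<exists>x\<in>subspace i. pairing k a x then (2::nat) ^ (u i - 1) else 0)"
  proof (rule dvd_sum)
    fix i assume "i \<in> {1..p}"
    then have "u i - 1 \<ge> 2" using u_ge_3[of i] by simp
    then show "4 dvd (if \<exists>x\<in>subspace i. pairing k a x then (2::nat) ^ (u i - 1) else 0)"
      using four_dvd by simp
  qed
  have "4 dvd hweight (codeword a) +
      (\<Sum>i = 1..p. if \<exists>x\<in>subspace i. pairing k a x then 2 ^ (u i - 1) else 0)"
    unfolding hweight_codeword[OF assms False] by (rule total)
  then show ?thesis by (simp only: dvd_add_left_iff[OF removed])
qed

lemma length_codeword [simp]: "length (codeword a) = length columns"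
  unfolding codeword_def by simp

lemma codeword_add: "bin_add (codeword a) (codeword b) = codeword (a + b)"
  unfolding bin_add_def codeword_def pairing_add_left by (simp add: zip_map_map zip_same_conv_map o_def)

lemma codeword_zero: "codeword 0 = Defs.zero_vec (length columns)"
proof -
  have "pairing k 0 = (\<lambda>_. False)" by auto
  then show ?thesis unfolding codeword_def Defs.zero_vec_def by (simp add: map_replicate_const)
qed

lemma codeword_eq_zero_iff:
  assumes "a \<in> ambient"
  shows "codeword a = Defs.zero_vec (length columns) \<longleftrightarrow> a = 0"
proof
  assume zero: "codeword a = Defs.zero_vec (length columns)"
  show "a = 0"
  proof (rule ccontr)
    assume "a \<noteq> 0"
    then have "hweight (codeword a) > 0"
      using hweight_codeword_top_le[OF assms] hweight_codeword_top_pos by linarith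
    then show False using zero by (simp add: hweight_def Defs.zero_vec_def)
  qed
qed (simp add: codeword_zero)

lemma inj_on_codeword: "inj_on codeword ambient"
proof (rule inj_onI)
  fix a b assume ab: "a \<in> ambient" "b \<in> ambient" "codeword a = codeword b"
  then have "codeword (a + b) = Defs.zero_vec (length columns)"
    by (metis codeword_add bin_add_self length_codeword)
  then have "a + b = 0" using codeword_eq_zero_iff ambient_add ab(1,2) by blast
  then show "a = b" using gf2_poly_add_add_cancel[of a b] by simp
qed

lemma bin_linear_code: "bin_linear_code (length columns) code"
  unfolding bin_linear_code_def code_def
proof (intro conjI ballI)
  show "codeword ` ambient \<subseteq> {v. length v = length columns}" by auto
  show "Defs.zero_vec (length columns) \<in> codeword ` ambient"
    using codeword_zero zero_in_ambient by (metis image_eqI)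
  fix x y assume "x \<in> codeword ` ambient" "y \<in> codeword ` ambient"
  then show "bin_add x y \<in> codeword ` ambient" using codeword_add ambient_add by auto
qed

lemma code_dim: "code_dim code k"
  unfolding code_dim_def code_def using card_image[OF inj_on_codeword] card_ambient by simp

lemma min_dist_code: "min_dist (length columns) code = hweight (codeword (monom 1 (k - 1)))"
  unfolding min_dist_def
proof (rule Min_eqI)
  show "finite {hweight c |c. c \<in> code \<and> c \<noteq> Defs.zero_vec (length columns)}"
    unfolding code_def using finite_ambient by simp
next
  fix w assume "w \<in> {hweight c |c. c \<in> code \<and> c \<noteq> Defs.zero_vec (length columns)}"
  then obtain a where "a \<in> ambient" "a \<noteq> 0" "w = hweight (codeword a)"
    unfolding code_def using codeword_zero by auto
  then show "hweight (codeword (monom 1 (k - 1))) \<le> w" using hweight_codeword_top_le by simp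
next
  have "monom 1 (k - 1) \<in> ambient" "monom (1::gf2) (k - 1) \<noteq> 0"
    using monom_in_ambient k_ge_4 by simp_all
  then show "hweight (codeword (monom 1 (k - 1))) \<in> {hweight c |c. c \<in> code \<and> c \<noteq> Defs.zero_vec (length columns)}"
    unfolding code_def using codeword_eq_zero_iff by blast
qed

lemma self_orthogonal_code: "self_orthogonal (length columns) code"
  using bin_linear_code four_dvd_hweight_codeword unfolding code_def
  by (auto intro: self_orthogonal_if_doubly_even)

lemma griesmer_params_code: "griesmer_params (length columns) k (hweight (codeword (monom 1 (k - 1))))"
proof (rule griesmer_paramsI)
  define E where "E = (\<lambda>i. u i - 1) ` {1..p}"
  have sum_E: "(\<Sum>e\<in>E. f e) = (\<Sum>i = 1..p. f (u i - 1))" for f :: "nat \<Rightarrow> nat"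
    unfolding E_def using sum.reindex[OF inj_on_u_minus_1, of f] by simp
  show "E \<subseteq> {..<k}" unfolding E_def using u_less_k by force
  show "k \<ge> 1" using k_ge_4 by simp
  show "hweight (codeword (monom 1 (k - 1))) + (\<Sum>e\<in>E. 2 ^ e) = s * 2 ^ (k - 1)"
    using hweight_codeword_top sum_E by simp
  have "(\<Sum>e\<in>E. 2 ^ (e + 1) - 1) = (\<Sum>i = 1..p. 2 ^ u i - (1::nat))"
    unfolding sum_E
  proof (rule sum.cong[OF refl])
    fix i assume "i \<in> {1..p}"
    then have "u i - 1 + 1 = u i" using u_ge_3[of i] by simp
    then show "2 ^ (u i - 1 + 1) - 1 = 2 ^ u i - (1::nat)" by simp
  qed
  then show "length columns + (\<Sum>e\<in>E. 2 ^ (e + 1) - 1) = s * (2 ^ k - 1)"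
    using length_columns by simp
qed

end

theorem corollary4p4:
  fixes k s p :: nat and u :: "nat \<Rightarrow> nat"
  assumes "k \<ge> 4" and "s \<ge> 1"
    and "\<forall>i\<in>{1..p}. 3 \<le> u i \<and> u i < k"
    and "\<forall>i\<in>{1..<p}. u i > u (i + 1)"
    and "(\<Sum>i = 1..min (s + 1) p. u i) \<le> s * k"
  shows "\<exists>C n d. bin_code_params C n k d \<and> self_orthogonal n C \<and> griesmer_params n k d
           \<and> int n = int s * (2 ^ k - 1) - (\<Sum>i = 1..p. 2 ^ u i - 1)
           \<and> int d = int s * 2 ^ (k - 1) - (\<Sum>i = 1..p. 2 ^ (u i - 1))"
proof -
  interpret anticode_construction k s p u
    using assms by unfold_locales
  have "int (length columns) = int s * (2 ^ k - 1) - (\<Sum>i = 1..p. 2 ^ u i - 1)"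
    using arg_cong[OF length_columns, of int] by (simp add: of_nat_diff of_nat_sum)
  moreover have "int (hweight (codeword (monom 1 (k - 1)))) = int s * 2 ^ (k - 1) - (\<Sum>i = 1..p. 2 ^ (u i - 1))"
    using arg_cong[OF hweight_codeword_top, of int] by (simp add: of_nat_sum)
  ultimately show ?thesis
    using bin_linear_code code_dim min_dist_code self_orthogonal_code griesmer_params_code
    unfolding bin_code_params_def by blast
qed

end
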